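(* Let $U\subseteq\mathbb{R}^8$ be open, let $\Theta\in C^\infty(U)$ satisfy the 4+4-dimensional TED equation $$\omega_{12}\omega_{34}+\omega_{23}\omega_{14}+\omega_{31}\omega_{24}=0\quad\text{on }U,$$ and assume $\omega_{12}\neq 0$ on $U$. Fix a constant $\lambda$ and put $D_i=\partial_{y^i}-\lambda\partial_{x^i}$ for $i=1,\dots,4$. Define the first-order operators $$X_3=\omega_{23}D_1+\omega_{31}D_2+\omega_{12}D_3,\qquad X_4=\omega_{24}D_1+\omega_{41}D_2+\omega_{12}D_4 .$$ The Lax pair $X_3\psi=0$, $X_4\psi=0$, written out as $$(\Theta_{x^1y^2}-\Theta_{x^2y^1})(\psi_{y^3}-\lambda\psi_{x^3})+(\Theta_{x^2y^3}-\Theta_{x^3y^2})(\psi_{y^1}-\lambda\psi_{x^1})+(\Theta_{x^3y^1}-\Theta_{x^1y^3})(\psi_{y^2}-\lambda\psi_{x^2})=0,$$ $$(\Theta_{x^1y^2}-\Theta_{x^2y^1})(\psi_{y^4}-\lambda\psi_{x^4})+(\Theta_{x^2y^4}-\Theta_{x^4y^2})(\psi_{y^1}-\lambda\psi_{x^1})+(\Theta_{x^4y^1}-\Theta_{x^1y^4})(\psi_{y^2}-\lambda\psi_{x^2})=0,$$ is then compatible. Precisely: there are smooth functions $\alpha,\beta$ on $U$ with $[X_3,X_4]=\alpha X_3+\beta X_4$.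
   Context: Coordinates on $\mathbb{R}^8$ are $(x^1,\dots,x^4,y^1,\dots,y^4)$, and subscripts denote partial derivatives. For $\Theta\in C^\infty(U)$ set $\omega_{ik}=\Theta_{x^iy^k}-\Theta_{x^ky^i}$, so that $\omega_{ik}=-\omega_{ki}$. The 4+4-dimensional TED equation is $\omega_{12}\omega_{34}+\omega_{23}\omega_{14}+\omega_{31}\omega_{24}=0$, i.e. the vanishing of the Pfaffian of the skew-symmetric $4\times4$ matrix $\omega=(\omega_{ik})$. *)

theory Defs
  imports "HOL-Analysis.Analysis"
begin

text \<open>Points of R^8 are pairs (x, y) with x, y :: real^4; coordinates x^i = x $ i,
  y^i = y $ i for i = 1,2,3,4 (elements of the index type 4; note (4::4) = 0,
  which is just a fourth label distinct from 1, 2, 3).\<close>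

type_synonym pt = "(real^4) \<times> (real^4)"

definition dd :: "'a::real_normed_vector \<Rightarrow> ('a \<Rightarrow> real) \<Rightarrow> 'a \<Rightarrow> real" where
  "dd v f p = deriv (\<lambda>t. f (p + t *\<^sub>R v)) 0"

fun iter_dd :: "'a::real_normed_vector list \<Rightarrow> ('a \<Rightarrow> real) \<Rightarrow> 'a \<Rightarrow> real" where
  "iter_dd [] f = f"
| "iter_dd (v # vs) f = dd v (iter_dd vs f)"

definition smooth_on :: "'a::euclidean_space set \<Rightarrow> ('a \<Rightarrow> real) \<Rightarrow> bool" where
  "smooth_on U f \<longleftrightarrow>
     (\<forall>vs. set vs \<subseteq> Basis \<longrightarrow>
        continuous_on U (iter_dd vs f) \<and>
        (\<forall>v\<in>Basis. \<forall>p\<in>U. (\<lambda>t. iter_dd vs f (p + t *\<^sub>R v)) differentiable (at 0)))"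

definition px :: "4 \<Rightarrow> (pt \<Rightarrow> real) \<Rightarrow> pt \<Rightarrow> real" where
  "px i f = dd (axis i 1, 0) f"

definition py :: "4 \<Rightarrow> (pt \<Rightarrow> real) \<Rightarrow> pt \<Rightarrow> real" where
  "py i f = dd (0, axis i 1) f"

definition omega :: "(pt \<Rightarrow> real) \<Rightarrow> 4 \<Rightarrow> 4 \<Rightarrow> pt \<Rightarrow> real" where
  "omega \<Theta> i k p = px i (py k \<Theta>) p - px k (py i \<Theta>) p"

definition TED :: "(pt \<Rightarrow> real) \<Rightarrow> pt \<Rightarrow> bool" where
  "TED \<Theta> p \<longleftrightarrow>
     omega \<Theta> 1 2 p * omega \<Theta> 3 4 p + omega \<Theta> 2 3 p * omega \<Theta> 1 4 p
     + omega \<Theta> 3 1 p * omega \<Theta> 2 4 p = 0"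

definition Dop :: "real \<Rightarrow> 4 \<Rightarrow> (pt \<Rightarrow> real) \<Rightarrow> pt \<Rightarrow> real" where
  "Dop lam i \<psi> p = py i \<psi> p - lam * px i \<psi> p"

definition X3 :: "(pt \<Rightarrow> real) \<Rightarrow> real \<Rightarrow> (pt \<Rightarrow> real) \<Rightarrow> pt \<Rightarrow> real" where
  "X3 \<Theta> lam \<psi> p = omega \<Theta> 2 3 p * Dop lam 1 \<psi> p + omega \<Theta> 3 1 p * Dop lam 2 \<psi> p
                   + omega \<Theta> 1 2 p * Dop lam 3 \<psi> p"

definition X4 :: "(pt \<Rightarrow> real) \<Rightarrow> real \<Rightarrow> (pt \<Rightarrow> real) \<Rightarrow> pt \<Rightarrow> real" where
  "X4 \<Theta> lam \<psi> p = omega \<Theta> 2 4 p * Dop lam 1 \<psi> p + omega \<Theta> 4 1 p * Dop lam 2 \<psi> p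
                   + omega \<Theta> 1 2 p * Dop lam 4 \<psi> p"

end

theory Submission
  imports Defs
begin

text \<open>The \<open>D\<^sub>j\<close> have constant coefficients, so they commute (Clairaut), and the commutator
  of two first-order operators \<open>X = \<Sum>\<^sub>j a\<^sub>j D\<^sub>j\<close>, \<open>Y = \<Sum>\<^sub>j b\<^sub>j D\<^sub>j\<close> is again first order:
  \<open>[X,Y] = \<Sum>\<^sub>k (X b\<^sub>k - Y a\<^sub>k) D\<^sub>k\<close>. For \<open>X\<^sub>3, X\<^sub>4\<close> the \<open>D\<^sub>3\<close>- and \<open>D\<^sub>4\<close>-coefficients of
  \<open>[X\<^sub>3,X\<^sub>4]\<close> are \<open>-X\<^sub>4 \<omega>\<^sub>1\<^sub>2\<close> and \<open>X\<^sub>3 \<omega>\<^sub>1\<^sub>2\<close>, which forces \<open>\<alpha> = -X\<^sub>4 \<omega>\<^sub>1\<^sub>2 / \<omega>\<^sub>1\<^sub>2\<close> and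
  \<open>\<beta> = X\<^sub>3 \<omega>\<^sub>1\<^sub>2 / \<omega>\<^sub>1\<^sub>2\<close>. That the \<open>D\<^sub>1\<close>- and \<open>D\<^sub>2\<close>-coefficients then match as well is a
  polynomial identity in \<open>\<omega>\<close> and the \<open>D\<^sub>j \<omega>\<^sub>i\<^sub>k\<close>, valid modulo the TED equation, its
  \<open>D\<^sub>j\<close>-derivatives, and the cyclic relations \<open>D\<^sub>j \<omega>\<^sub>i\<^sub>k + D\<^sub>i \<omega>\<^sub>k\<^sub>j + D\<^sub>k \<omega>\<^sub>j\<^sub>i = 0\<close>
  that hold because \<open>\<omega>\<close> comes from a potential \<open>\<Theta>\<close>.\<close>

section \<open>Directional derivatives\<close>

definition dd_differentiable :: "'a::real_normed_vector \<Rightarrow> ('a \<Rightarrow> real) \<Rightarrow> 'a \<Rightarrow> bool" where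
  "dd_differentiable v f p \<longleftrightarrow> (\<lambda>t. f (p + t *\<^sub>R v)) differentiable (at 0)"

lemma dd_has_real_derivative:
  "dd_differentiable v f p \<Longrightarrow> ((\<lambda>t. f (p + t *\<^sub>R v)) has_real_derivative dd v f p) (at 0)"
  unfolding dd_differentiable_def dd_def using DERIV_deriv_iff_real_differentiable by blast

lemma dd_eqI: "((\<lambda>t. f (p + t *\<^sub>R v)) has_real_derivative D) (at 0) \<Longrightarrow> dd v f p = D"
  unfolding dd_def by (rule DERIV_imp_deriv)

lemma dd_differentiableI:
  "((\<lambda>t. f (p + t *\<^sub>R v)) has_real_derivative D) (at 0) \<Longrightarrow> dd_differentiable v f p"
  unfolding dd_differentiable_def using real_differentiable_def by blast

lemma dd_const: "dd v (\<lambda>q. c) p = 0"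
  by (rule dd_eqI) simp

lemma dd_differentiable_const: "dd_differentiable v (\<lambda>q. c) p"
  by (rule dd_differentiableI) (rule DERIV_const)

lemma dd_add:
  "dd_differentiable v f p \<Longrightarrow> dd_differentiable v g p \<Longrightarrow>
     dd v (\<lambda>q. f q + g q) p = dd v f p + dd v g p"
  by (rule dd_eqI) (intro DERIV_add dd_has_real_derivative)

lemma dd_differentiable_add:
  "dd_differentiable v f p \<Longrightarrow> dd_differentiable v g p \<Longrightarrow> dd_differentiable v (\<lambda>q. f q + g q) p"
  by (rule dd_differentiableI) (rule DERIV_add; rule dd_has_real_derivative; assumption)

lemma dd_diff:
  "dd_differentiable v f p \<Longrightarrow> dd_differentiable v g p \<Longrightarrow>
     dd v (\<lambda>q. f q - g q) p = dd v f p - dd v g p"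
  by (rule dd_eqI) (intro DERIV_diff dd_has_real_derivative)

lemma dd_cmult: "dd_differentiable v f p \<Longrightarrow> dd v (\<lambda>q. c * f q) p = c * dd v f p"
  by (rule dd_eqI) (intro DERIV_cmult dd_has_real_derivative)

lemma dd_mult:
  "dd_differentiable v f p \<Longrightarrow> dd_differentiable v g p \<Longrightarrow>
     dd v (\<lambda>q. f q * g q) p = f p * dd v g p + dd v f p * g p"
  by (rule dd_eqI) (rule DERIV_mult'[THEN DERIV_cong], (rule dd_has_real_derivative, assumption)+, simp)

lemma dd_differentiable_mult:
  "dd_differentiable v f p \<Longrightarrow> dd_differentiable v g p \<Longrightarrow> dd_differentiable v (\<lambda>q. f q * g q) p"
  by (rule dd_differentiableI) (rule DERIV_mult'; rule dd_has_real_derivative; assumption)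

lemma dd_inverse:
  "dd_differentiable v f p \<Longrightarrow> f p \<noteq> 0 \<Longrightarrow> dd v (\<lambda>q. 1 / f q) p = - dd v f p / (f p)\<^sup>2"
  by (rule dd_eqI) (rule DERIV_divide[OF DERIV_const dd_has_real_derivative, THEN DERIV_cong],
      auto simp: power2_eq_square)

lemma dd_differentiable_inverse:
  "dd_differentiable v f p \<Longrightarrow> f p \<noteq> 0 \<Longrightarrow> dd_differentiable v (\<lambda>q. 1 / f q) p"
  by (rule dd_differentiableI) (rule DERIV_divide[OF DERIV_const dd_has_real_derivative], auto)

lemma eventually_line_in_open:
  fixes p v :: "'a::real_normed_vector"
  assumes "open U" "p \<in> U"
  shows "eventually (\<lambda>t. p + t *\<^sub>R v \<in> U) (nhds (0::real))"
proof -
  have "((\<lambda>t::real. p + t *\<^sub>R v) \<longlongrightarrow> p + 0 *\<^sub>R v) (nhds 0)"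
    by (intro tendsto_intros tendsto_ident_at[of 0 UNIV, unfolded at_within_open[OF _ open_UNIV]]
        filterlim_ident)
  thus ?thesis using assms by (simp add: topological_tendstoD)
qed

lemma dd_cong_open:
  assumes "open U" "p \<in> U" "\<forall>q\<in>U. f q = g q"
  shows "dd v f p = dd v g p"
  unfolding dd_def
  by (rule deriv_cong_ev[OF _ refl])
     (use eventually_line_in_open[OF assms(1,2), of v] assms(3) in \<open>auto elim: eventually_mono\<close>)

lemma dd_differentiable_cong_open:
  assumes "open U" "p \<in> U" "\<forall>q\<in>U. f q = g q" "dd_differentiable v f p"
  shows "dd_differentiable v g p"
proof -
  have "((\<lambda>t. g (p + t *\<^sub>R v)) has_real_derivative dd v f p) (at 0)"
    using dd_has_real_derivative[OF assms(4)]
    by (subst DERIV_cong_ev[OF refl _ refl])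
       (use eventually_line_in_open[OF assms(1,2), of v] assms(3) in \<open>auto elim: eventually_mono\<close>)
  thus ?thesis by (rule dd_differentiableI)
qed

lemma iter_dd_cong_open:
  "open U \<Longrightarrow> \<forall>q\<in>U. f q = g q \<Longrightarrow> \<forall>q\<in>U. iter_dd vs f q = iter_dd vs g q"
  by (induction vs) (auto intro: dd_cong_open)

lemma iter_dd_append: "iter_dd (vs @ ws) f = iter_dd vs (iter_dd ws f)"
  by (induction vs) auto

lemma iter_dd_const: "\<exists>k. iter_dd vs (\<lambda>q. c) = (\<lambda>q. k)"
  by (induction vs) (auto simp: dd_const[abs_def])

lemma dd_has_real_derivative_along_line:
  assumes "dd_differentiable u f (p + s *\<^sub>R u)"
  shows "((\<lambda>s. f (p + s *\<^sub>R u)) has_real_derivative dd u f (p + s *\<^sub>R u)) (at s)"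
proof -
  have "((\<lambda>t. f (p + (t + s) *\<^sub>R u)) has_real_derivative dd u f (p + s *\<^sub>R u)) (at 0)"
    using dd_has_real_derivative[OF assms] by (simp add: scaleR_add_left add_ac)
  hence "((\<lambda>s. f (p + s *\<^sub>R u)) has_real_derivative dd u f (p + s *\<^sub>R u)) (at (0 + s))"
    using DERIV_shift by (metis (no_types, lifting) ext)
  thus ?thesis by simp
qed

section \<open>Finite-order smoothness\<close>

definition cont_pdiff_on :: "'a::euclidean_space set \<Rightarrow> ('a \<Rightarrow> real) \<Rightarrow> bool" where
  "cont_pdiff_on U h \<longleftrightarrow> continuous_on U h \<and> (\<forall>v\<in>Basis. \<forall>p\<in>U. dd_differentiable v h p)"

definition smooth_upto :: "nat \<Rightarrow> 'a::euclidean_space set \<Rightarrow> ('a \<Rightarrow> real) \<Rightarrow> bool" where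
  "smooth_upto n U f \<longleftrightarrow>
     (\<forall>vs. set vs \<subseteq> Basis \<longrightarrow> length vs \<le> n \<longrightarrow> cont_pdiff_on U (iter_dd vs f))"

lemma smooth_on_iff_smooth_upto: "smooth_on U f \<longleftrightarrow> (\<forall>n. smooth_upto n U f)"
  unfolding smooth_on_def smooth_upto_def cont_pdiff_on_def dd_differentiable_def
  by (meson order_refl)

lemma cont_pdiff_on_cong:
  assumes "open U" "\<forall>q\<in>U. h q = h' q" "cont_pdiff_on U h"
  shows "cont_pdiff_on U h'"
  using assms continuous_on_cong[of U U h h'] dd_differentiable_cong_open[OF assms(1) _ assms(2)]
  unfolding cont_pdiff_on_def by auto

lemma cont_pdiff_on_add:
  "cont_pdiff_on U f \<Longrightarrow> cont_pdiff_on U g \<Longrightarrow> cont_pdiff_on U (\<lambda>q. f q + g q)"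
  unfolding cont_pdiff_on_def by (auto intro!: continuous_on_add dd_differentiable_add)

lemma cont_pdiff_on_mult:
  "cont_pdiff_on U f \<Longrightarrow> cont_pdiff_on U g \<Longrightarrow> cont_pdiff_on U (\<lambda>q. f q * g q)"
  unfolding cont_pdiff_on_def by (auto intro!: continuous_on_mult dd_differentiable_mult)

lemma cont_pdiff_on_inverse:
  "cont_pdiff_on U f \<Longrightarrow> \<forall>q\<in>U. f q \<noteq> 0 \<Longrightarrow> cont_pdiff_on U (\<lambda>q. 1 / f q)"
  unfolding cont_pdiff_on_def by (auto intro!: continuous_on_divide dd_differentiable_inverse)

lemma smooth_upto_mono: "m \<le> n \<Longrightarrow> smooth_upto n U f \<Longrightarrow> smooth_upto m U f"
  unfolding smooth_upto_def by auto

lemma smooth_upto_imp_cont_pdiff_on: "smooth_upto n U f \<Longrightarrow> cont_pdiff_on U f"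
  unfolding smooth_upto_def by (metis empty_subsetI iter_dd.simps(1) le0 list.size(3) set_empty)

lemma smooth_upto_0I: "cont_pdiff_on U h \<Longrightarrow> smooth_upto 0 U h"
  unfolding smooth_upto_def by auto

lemma smooth_upto_dd: "smooth_upto (Suc n) U f \<Longrightarrow> v \<in> Basis \<Longrightarrow> smooth_upto n U (dd v f)"
  unfolding smooth_upto_def
proof (intro allI impI)
  fix vs :: "'a list" assume "\<forall>vs. set vs \<subseteq> Basis \<longrightarrow> length vs \<le> Suc n \<longrightarrow> cont_pdiff_on U (iter_dd vs f)"
    "v \<in> Basis" "set vs \<subseteq> Basis" "length vs \<le> n"
  then have "cont_pdiff_on U (iter_dd (vs @ [v]) f)" by auto
  thus "cont_pdiff_on U (iter_dd vs (dd v f))" by (simp add: iter_dd_append)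
qed

lemma smooth_upto_SucI:
  assumes "open U" "cont_pdiff_on U h"
    and "\<And>v. v \<in> Basis \<Longrightarrow> smooth_upto n U (h' v)"
    and "\<And>v q. v \<in> Basis \<Longrightarrow> q \<in> U \<Longrightarrow> dd v h q = h' v q"
  shows "smooth_upto (Suc n) U h"
  unfolding smooth_upto_def
proof (intro allI impI)
  fix vs :: "'a list" assume vs: "set vs \<subseteq> Basis" "length vs \<le> Suc n"
  show "cont_pdiff_on U (iter_dd vs h)"
  proof (cases vs rule: rev_exhaust)
    case Nil thus ?thesis using assms(2) by simp
  next
    case (snoc ws v)
    with vs have v: "v \<in> Basis" and ws: "set ws \<subseteq> Basis" "length ws \<le> n" by auto
    have "cont_pdiff_on U (iter_dd ws (h' v))" using assms(3)[OF v] ws unfolding smooth_upto_def by blast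
    moreover have "\<forall>q\<in>U. iter_dd ws (h' v) q = iter_dd ws (dd v h) q"
      using iter_dd_cong_open[OF assms(1)] assms(4)[OF v] by metis
    ultimately have "cont_pdiff_on U (iter_dd ws (dd v h))" using cont_pdiff_on_cong[OF assms(1)] by blast
    thus ?thesis using snoc by (simp add: iter_dd_append)
  qed
qed

lemma smooth_upto_const: "smooth_upto n U (\<lambda>q. c)"
  unfolding smooth_upto_def
proof (intro allI impI)
  fix vs :: "'a list"
  obtain k where "iter_dd vs (\<lambda>q. c) = (\<lambda>q. k)" using iter_dd_const by blast
  thus "cont_pdiff_on U (iter_dd vs (\<lambda>q. c))"
    unfolding cont_pdiff_on_def by (simp add: dd_differentiable_const)
qed

lemma smooth_upto_add:
  "open U \<Longrightarrow> smooth_upto n U f \<Longrightarrow> smooth_upto n U g \<Longrightarrow> smooth_upto n U (\<lambda>q. f q + g q)"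
proof (induction n arbitrary: f g)
  case 0
  thus ?case by (intro smooth_upto_0I cont_pdiff_on_add smooth_upto_imp_cont_pdiff_on)
next
  case (Suc n)
  show ?case
  proof (rule smooth_upto_SucI[where h' = "\<lambda>v q. dd v f q + dd v g q"])
    show "cont_pdiff_on U (\<lambda>q. f q + g q)"
      using Suc.prems by (intro cont_pdiff_on_add smooth_upto_imp_cont_pdiff_on)
    show "smooth_upto n U (\<lambda>q. dd v f q + dd v g q)" if "v \<in> Basis" for v
      using Suc that by (intro Suc.IH smooth_upto_dd) auto
    show "dd v (\<lambda>q. f q + g q) q = dd v f q + dd v g q" if "v \<in> Basis" "q \<in> U" for v q
      using Suc.prems that by (auto intro!: dd_add simp: cont_pdiff_on_def dest!: smooth_upto_imp_cont_pdiff_on)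
  qed (rule Suc.prems)
qed

lemma smooth_upto_mult:
  "open U \<Longrightarrow> smooth_upto n U f \<Longrightarrow> smooth_upto n U g \<Longrightarrow> smooth_upto n U (\<lambda>q. f q * g q)"
proof (induction n arbitrary: f g)
  case 0
  thus ?case by (intro smooth_upto_0I cont_pdiff_on_mult smooth_upto_imp_cont_pdiff_on)
next
  case (Suc n)
  have fg: "smooth_upto n U f" "smooth_upto n U g"
    using Suc.prems smooth_upto_mono[of n "Suc n"] by auto
  show ?case
  proof (rule smooth_upto_SucI[where h' = "\<lambda>v q. f q * dd v g q + dd v f q * g q"])
    show "cont_pdiff_on U (\<lambda>q. f q * g q)"
      using Suc.prems by (intro cont_pdiff_on_mult smooth_upto_imp_cont_pdiff_on)
    show "smooth_upto n U (\<lambda>q. f q * dd v g q + dd v f q * g q)" if "v \<in> Basis" for v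
      using Suc fg that by (intro smooth_upto_add Suc.IH smooth_upto_dd) auto
    show "dd v (\<lambda>q. f q * g q) q = f q * dd v g q + dd v f q * g q" if "v \<in> Basis" "q \<in> U" for v q
      using Suc.prems that by (auto intro!: dd_mult simp: cont_pdiff_on_def dest!: smooth_upto_imp_cont_pdiff_on)
  qed (rule Suc.prems)
qed

lemma smooth_upto_inverse:
  "open U \<Longrightarrow> smooth_upto n U f \<Longrightarrow> \<forall>q\<in>U. f q \<noteq> 0 \<Longrightarrow> smooth_upto n U (\<lambda>q. 1 / f q)"
proof (induction n arbitrary: f)
  case 0
  thus ?case by (intro smooth_upto_0I cont_pdiff_on_inverse smooth_upto_imp_cont_pdiff_on)
next
  case (Suc n)
  have inv: "smooth_upto n U (\<lambda>q. 1 / f q)"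
    using Suc.prems smooth_upto_mono[of n "Suc n"] by (intro Suc.IH) auto
  show ?case
  proof (rule smooth_upto_SucI[where h' = "\<lambda>v q. (- 1) * dd v f q * (1 / f q) * (1 / f q)"])
    show "cont_pdiff_on U (\<lambda>q. 1 / f q)"
      using Suc.prems by (intro cont_pdiff_on_inverse smooth_upto_imp_cont_pdiff_on)
    show "smooth_upto n U (\<lambda>q. (- 1) * dd v f q * (1 / f q) * (1 / f q))" if "v \<in> Basis" for v
      using Suc inv that by (intro smooth_upto_mult smooth_upto_const smooth_upto_dd) auto
    show "dd v (\<lambda>q. 1 / f q) q = (- 1) * dd v f q * (1 / f q) * (1 / f q)" if "v \<in> Basis" "q \<in> U" for v q
      using Suc.prems that
      by (auto simp: dd_inverse power2_eq_square cont_pdiff_on_def dest!: smooth_upto_imp_cont_pdiff_on)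
  qed (rule Suc.prems)
qed

lemma smooth_on_const: "smooth_on U (\<lambda>q. c)"
  by (simp add: smooth_on_iff_smooth_upto smooth_upto_const)

lemma smooth_on_add: "open U \<Longrightarrow> smooth_on U f \<Longrightarrow> smooth_on U g \<Longrightarrow> smooth_on U (\<lambda>q. f q + g q)"
  by (simp add: smooth_on_iff_smooth_upto smooth_upto_add)

lemma smooth_on_mult: "open U \<Longrightarrow> smooth_on U f \<Longrightarrow> smooth_on U g \<Longrightarrow> smooth_on U (\<lambda>q. f q * g q)"
  by (simp add: smooth_on_iff_smooth_upto smooth_upto_mult)

lemma smooth_on_inverse:
  "open U \<Longrightarrow> smooth_on U f \<Longrightarrow> \<forall>q\<in>U. f q \<noteq> 0 \<Longrightarrow> smooth_on U (\<lambda>q. 1 / f q)"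
  by (simp add: smooth_on_iff_smooth_upto smooth_upto_inverse)

lemma smooth_on_dd: "smooth_on U f \<Longrightarrow> v \<in> Basis \<Longrightarrow> smooth_on U (dd v f)"
  by (simp add: smooth_on_iff_smooth_upto smooth_upto_dd)

lemma smooth_on_minus:
  assumes "open U" "smooth_on U f"
  shows "smooth_on U (\<lambda>q. - f q)"
proof -
  have "smooth_on U (\<lambda>q. (- 1) * f q)" using assms by (intro smooth_on_mult smooth_on_const)
  thus ?thesis by simp
qed

lemma smooth_on_diff:
  assumes "open U" "smooth_on U f" "smooth_on U g"
  shows "smooth_on U (\<lambda>q. f q - g q)"
proof -
  have "smooth_on U (\<lambda>q. f q + - g q)" using assms by (intro smooth_on_add smooth_on_minus)
  thus ?thesis by simp
qed

lemma smooth_on_divide: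
  assumes "open U" "smooth_on U f" "smooth_on U g" "\<forall>q\<in>U. g q \<noteq> 0"
  shows "smooth_on U (\<lambda>q. f q / g q)"
proof -
  have "smooth_on U (\<lambda>q. f q * (1 / g q))" using assms by (intro smooth_on_mult smooth_on_inverse)
  thus ?thesis by simp
qed

lemma smooth_on_sum:
  "open U \<Longrightarrow> (\<And>k. k \<in> K \<Longrightarrow> smooth_on U (f k)) \<Longrightarrow> smooth_on U (\<lambda>q. \<Sum>k\<in>K. f k q)"
  by (induction K rule: infinite_finite_induct) (auto intro: smooth_on_const smooth_on_add)

lemma smooth_on_imp_smooth_upto: "smooth_on U f \<Longrightarrow> smooth_upto n U f"
  by (simp add: smooth_on_iff_smooth_upto)

lemma smooth_on_imp_dd_differentiable:
  "smooth_on U f \<Longrightarrow> v \<in> Basis \<Longrightarrow> p \<in> U \<Longrightarrow> dd_differentiable v f p"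
  unfolding smooth_on_def dd_differentiable_def by (metis empty_subsetI iter_dd.simps(1) set_empty)

section \<open>Symmetry of second derivatives\<close>

lemma second_difference_mvt:
  fixes f :: "'a::euclidean_space \<Rightarrow> real"
  assumes U: "open U" "smooth_upto 2 U f" and uv: "u \<in> Basis" "v \<in> Basis" and h: "h > 0"
    and sub: "cball p (2 * h) \<subseteq> U"
  shows "\<exists>\<xi>\<in>cball p (2 * h). f (p + h *\<^sub>R u + h *\<^sub>R v) - f (p + h *\<^sub>R u) - f (p + h *\<^sub>R v) + f p
            = h * h * dd v (dd u f) \<xi>"
proof -
  have near: "dist p (p + s *\<^sub>R u + t *\<^sub>R v) \<le> 2 * h"
    if "0 \<le> s" "s \<le> h" "0 \<le> t" "t \<le> h" for s t
  proof -
    have "dist p (p + s *\<^sub>R u + t *\<^sub>R v) = norm (s *\<^sub>R u + t *\<^sub>R v)"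
      using dist_norm[of "p + (s *\<^sub>R u + t *\<^sub>R v)" p] by (simp add: dist_commute add.assoc)
    also have "\<dots> \<le> s + t" using norm_triangle_ineq[of "s *\<^sub>R u" "t *\<^sub>R v"] uv that by simp
    finally show ?thesis using that by simp
  qed
  have inU: "p + s *\<^sub>R u + t *\<^sub>R v \<in> U" if "0 \<le> s" "s \<le> h" "0 \<le> t" "t \<le> h" for s t
    using near[OF that] sub by auto
  have f2: "smooth_upto (Suc (Suc 0)) U f" using U(2) by (simp add: numeral_2_eq_2)
  have diff_u: "dd_differentiable u f q" if "q \<in> U" for q
    using smooth_upto_imp_cont_pdiff_on[OF U(2)] uv that unfolding cont_pdiff_on_def by blast
  have diff_vu: "dd_differentiable v (dd u f) q" if "q \<in> U" for q
    using smooth_upto_imp_cont_pdiff_on[OF smooth_upto_dd[OF f2 uv(1)]] uv that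
    unfolding cont_pdiff_on_def by blast
  define g where "g s = f ((p + h *\<^sub>R v) + s *\<^sub>R u) - f (p + s *\<^sub>R u)" for s
  have "DERIV g s :> dd u f ((p + h *\<^sub>R v) + s *\<^sub>R u) - dd u f (p + s *\<^sub>R u)"
    if "0 \<le> s" "s \<le> h" for s
  proof -
    have "p + h *\<^sub>R v + s *\<^sub>R u \<in> U" using inU[OF that, of h] h by (simp add: add_ac)
    moreover have "p + s *\<^sub>R u \<in> U" using inU[OF that, of 0] h by simp
    ultimately show ?thesis
      unfolding g_def by (intro DERIV_diff dd_has_real_derivative_along_line diff_u)
  qed
  from MVT2[OF h this] obtain s1 where s1: "0 < s1" "s1 < h"
    "g h - g 0 = h * (dd u f ((p + h *\<^sub>R v) + s1 *\<^sub>R u) - dd u f (p + s1 *\<^sub>R u))"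
    by auto
  define k where "k t = dd u f ((p + s1 *\<^sub>R u) + t *\<^sub>R v)" for t
  have "DERIV k t :> dd v (dd u f) ((p + s1 *\<^sub>R u) + t *\<^sub>R v)" if "0 \<le> t" "t \<le> h" for t
    unfolding k_def using inU[of s1 t] s1 that
    by (intro dd_has_real_derivative_along_line diff_vu) auto
  from MVT2[OF h this] obtain t1 where t1: "0 < t1" "t1 < h"
    "k h - k 0 = h * dd v (dd u f) ((p + s1 *\<^sub>R u) + t1 *\<^sub>R v)"
    by auto
  have "f (p + h *\<^sub>R u + h *\<^sub>R v) - f (p + h *\<^sub>R u) - f (p + h *\<^sub>R v) + f p = g h - g 0"
    unfolding g_def by (simp add: add_ac)
  also have "\<dots> = h * (k h - k 0)" using s1(3) unfolding k_def by (simp add: add_ac)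
  also have "\<dots> = h * h * dd v (dd u f) (p + s1 *\<^sub>R u + t1 *\<^sub>R v)" using t1(3) by simp
  finally show ?thesis
    using near[of s1 t1] s1 t1 by (intro bexI[of _ "p + s1 *\<^sub>R u + t1 *\<^sub>R v"]) auto
qed

text \<open>Clairaut: both mixed partials are limits of the same second difference quotient.\<close>

lemma dd_commute:
  fixes f :: "'a::euclidean_space \<Rightarrow> real"
  assumes U: "open U" "smooth_upto 2 U f" and uv: "u \<in> Basis" "v \<in> Basis" and p: "p \<in> U"
  shows "dd u (dd v f) p = dd v (dd u f) p"
proof (rule ccontr)
  define A where "A = dd u (dd v f)"
  define B where "B = dd v (dd u f)"
  define e where "e = \<bar>A p - B p\<bar> / 3"
  assume "dd u (dd v f) p \<noteq> dd v (dd u f) p"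
  then have e: "e > 0" unfolding e_def A_def B_def by simp
  have f2: "smooth_upto (Suc (Suc 0)) U f" using U(2) by (simp add: numeral_2_eq_2)
  have "smooth_upto 0 U A" "smooth_upto 0 U B"
    unfolding A_def B_def using smooth_upto_dd[OF smooth_upto_dd[OF f2]] uv by auto
  then have "continuous_on U A" "continuous_on U B"
    by (auto dest: smooth_upto_imp_cont_pdiff_on simp: cont_pdiff_on_def)
  then obtain dA dB where dA: "dA > 0" "\<forall>x\<in>U. dist x p < dA \<longrightarrow> dist (A x) (A p) < e"
    and dB: "dB > 0" "\<forall>x\<in>U. dist x p < dB \<longrightarrow> dist (B x) (B p) < e"
    using p e unfolding continuous_on_iff by blast
  obtain r where r: "r > 0" "ball p r \<subseteq> U" using U(1) p open_contains_ball by blast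
  define h where "h = min r (min dA dB) / 3"
  have h: "h > 0" "2 * h < r" "2 * h < dA" "2 * h < dB"
    using r dA dB unfolding h_def by auto
  have "cball p (2 * h) \<subseteq> ball p r" using h(2) by (auto simp: subset_eq)
  then have sub: "cball p (2 * h) \<subseteq> U" using r(2) by blast
  obtain \<xi> where \<xi>: "\<xi> \<in> cball p (2 * h)"
    "f (p + h *\<^sub>R u + h *\<^sub>R v) - f (p + h *\<^sub>R u) - f (p + h *\<^sub>R v) + f p = h * h * B \<xi>"
    using second_difference_mvt[OF U uv h(1) sub] unfolding B_def by blast
  obtain \<eta> where \<eta>: "\<eta> \<in> cball p (2 * h)"
    "f (p + h *\<^sub>R v + h *\<^sub>R u) - f (p + h *\<^sub>R v) - f (p + h *\<^sub>R u) + f p = h * h * A \<eta>"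
    using second_difference_mvt[OF U uv(2,1) h(1) sub] unfolding A_def by blast
  have swap: "p + h *\<^sub>R v + h *\<^sub>R u = p + h *\<^sub>R u + h *\<^sub>R v" by (simp add: add_ac)
  have "h * h * A \<eta> = h * h * B \<xi>" using \<xi>(2) \<eta>(2) unfolding swap by linarith
  then have "A \<eta> = B \<xi>" using h by simp
  moreover have "\<xi> \<in> U" "dist \<xi> p < dB" "\<eta> \<in> U" "dist \<eta> p < dA"
    using \<xi>(1) \<eta>(1) sub h by (auto simp: dist_commute)
  then have "\<bar>B \<xi> - B p\<bar> < e" "\<bar>A \<eta> - A p\<bar> < e"
    using dA(2) dB(2) by (auto simp: dist_real_def)
  ultimately have "\<bar>A p - B p\<bar> < 2 * e" by linarith
  thus False unfolding e_def by simp
qed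

lemma dd_commute_inner:
  assumes "open U" "smooth_on U f" "u \<in> Basis" "v \<in> Basis" "w \<in> Basis" "p \<in> U"
  shows "dd u (dd v (dd w f)) p = dd u (dd w (dd v f)) p"
  using assms dd_commute[OF assms(1) smooth_on_imp_smooth_upto[OF assms(2)] assms(4,5)]
  by (intro dd_cong_open) auto

lemma x_axis_in_Basis: "((axis i 1, 0) :: pt) \<in> Basis"
  by (auto simp: Basis_prod_def Basis_vec_def)

lemma y_axis_in_Basis: "((0, axis i 1) :: pt) \<in> Basis"
  by (auto simp: Basis_prod_def Basis_vec_def)

lemma Dop_eq_dd: "Dop lam j f p = dd (0, axis j 1) f p - lam * dd (axis j 1, 0) f p"
  by (simp add: Dop_def px_def py_def)

lemma smooth_on_Dop: "open U \<Longrightarrow> smooth_on U f \<Longrightarrow> smooth_on U (Dop lam j f)"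
  unfolding Dop_def[abs_def] px_def py_def
  by (intro smooth_on_diff smooth_on_mult smooth_on_const smooth_on_dd x_axis_in_Basis y_axis_in_Basis)

lemma Dop_const: "Dop lam j (\<lambda>q. c) p = 0"
  by (simp add: Dop_eq_dd dd_const)

lemma Dop_add:
  "smooth_on U f \<Longrightarrow> smooth_on U g \<Longrightarrow> p \<in> U \<Longrightarrow>
     Dop lam j (\<lambda>q. f q + g q) p = Dop lam j f p + Dop lam j g p"
  by (simp add: Dop_eq_dd dd_add smooth_on_imp_dd_differentiable x_axis_in_Basis y_axis_in_Basis
      algebra_simps)

lemma Dop_mult:
  "smooth_on U f \<Longrightarrow> smooth_on U g \<Longrightarrow> p \<in> U \<Longrightarrow>
     Dop lam j (\<lambda>q. f q * g q) p = f p * Dop lam j g p + Dop lam j f p * g p"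
  by (simp add: Dop_eq_dd dd_mult smooth_on_imp_dd_differentiable x_axis_in_Basis y_axis_in_Basis
      algebra_simps)

lemma Dop_sum:
  "open U \<Longrightarrow> (\<And>k. k \<in> K \<Longrightarrow> smooth_on U (f k)) \<Longrightarrow> p \<in> U \<Longrightarrow>
     Dop lam j (\<lambda>q. \<Sum>k\<in>K. f k q) p = (\<Sum>k\<in>K. Dop lam j (f k) p)"
proof (induction K rule: infinite_finite_induct)
  case (insert k K)
  then have "smooth_on U (\<lambda>q. \<Sum>k\<in>K. f k q)" by (intro smooth_on_sum) auto
  with insert show ?case using Dop_add[of U "f k" "\<lambda>q. \<Sum>k\<in>K. f k q" p lam j] by simp
qed (simp_all add: Dop_const)

lemma Dop_cong_open: "open U \<Longrightarrow> p \<in> U \<Longrightarrow> \<forall>q\<in>U. f q = g q \<Longrightarrow> Dop lam j f p = Dop lam j g p"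
  unfolding Dop_eq_dd using dd_cong_open[of U p f g] by simp

lemma Dop_Dop:
  assumes "smooth_on U f" "p \<in> U"
  shows "Dop lam j (Dop lam k f) p =
    dd (0, axis j 1) (dd (0, axis k 1) f) p - lam * dd (0, axis j 1) (dd (axis k 1, 0) f) p
    - lam * (dd (axis j 1, 0) (dd (0, axis k 1) f) p - lam * dd (axis j 1, 0) (dd (axis k 1, 0) f) p)"
proof -
  have "Dop lam k f = (\<lambda>q. dd (0, axis k 1) f q - lam * dd (axis k 1, 0) f q)"
    by (simp add: Dop_eq_dd fun_eq_iff)
  moreover have "dd_differentiable v (dd w f) p" if "v \<in> Basis" "w \<in> Basis" for v w
    using assms that by (intro smooth_on_imp_dd_differentiable smooth_on_dd)
  ultimately show ?thesis
    by (simp add: Dop_eq_dd dd_diff dd_cmult dd_differentiable_mult dd_differentiable_const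
        x_axis_in_Basis y_axis_in_Basis)
qed

lemma Dop_commute:
  assumes "open U" "smooth_on U f" "p \<in> U"
  shows "Dop lam j (Dop lam k f) p = Dop lam k (Dop lam j f) p"
proof -
  have "dd u (dd v f) p = dd v (dd u f) p" if "u \<in> Basis" "v \<in> Basis" for u v
    using dd_commute[OF assms(1) smooth_on_imp_smooth_upto[OF assms(2)] that assms(3)] .
  thus ?thesis
    unfolding Dop_Dop[OF assms(2,3)] by (simp add: x_axis_in_Basis y_axis_in_Basis algebra_simps)
qed

lemma omega_eq_dd:
  "omega \<Theta> i k = (\<lambda>p. dd (axis i 1, 0) (dd (0, axis k 1) \<Theta>) p - dd (axis k 1, 0) (dd (0, axis i 1) \<Theta>) p)"
  by (simp add: omega_def px_def py_def fun_eq_iff)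

lemma smooth_on_omega: "open U \<Longrightarrow> smooth_on U \<Theta> \<Longrightarrow> smooth_on U (omega \<Theta> i k)"
  unfolding omega_eq_dd by (intro smooth_on_diff smooth_on_dd x_axis_in_Basis y_axis_in_Basis)

lemma omega_antisym: "omega \<Theta> k i p = - omega \<Theta> i k p"
  by (simp add: omega_def)

lemma Dop_omega_antisym:
  assumes "open U" "smooth_on U \<Theta>" "p \<in> U"
  shows "Dop lam j (omega \<Theta> k i) p = - Dop lam j (omega \<Theta> i k) p"
proof -
  have "omega \<Theta> k i = (\<lambda>q. - omega \<Theta> i k q)" by (simp add: omega_def fun_eq_iff)
  moreover have "Dop lam j (\<lambda>q. - omega \<Theta> i k q) p = - Dop lam j (omega \<Theta> i k) p"
    using Dop_mult[OF smooth_on_const[of U "- 1"] smooth_on_omega[OF assms(1,2)] assms(3)]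
    by (simp add: Dop_const)
  ultimately show ?thesis by simp
qed

text \<open>Only the symmetry of the third derivatives \<open>\<Theta>\<^sub>x\<^sub>y\<^sub>y\<close> and \<open>\<Theta>\<^sub>x\<^sub>x\<^sub>y\<close> enters.\<close>

lemma Dop_omega_cyclic:
  assumes U: "open U" and \<Theta>: "smooth_on U \<Theta>" and p: "p \<in> U"
  shows "Dop lam j (omega \<Theta> i k) p + Dop lam i (omega \<Theta> k j) p + Dop lam k (omega \<Theta> j i) p = 0"
proof -
  let ?x = "\<lambda>i. (axis i 1, 0) :: pt" and ?y = "\<lambda>i. (0, axis i 1) :: pt"
  define T where "T a b c = dd (?x a) (dd (?y b) (dd (?y c) \<Theta>)) p" for a b c
  define S where "S a b c = dd (?x a) (dd (?x b) (dd (?y c) \<Theta>)) p" for a b c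
  have \<Theta>1: "smooth_on U (dd (?y c) \<Theta>)" for c using \<Theta> by (intro smooth_on_dd y_axis_in_Basis)
  have \<Theta>2: "smooth_on U (dd (?x a) (dd (?y c) \<Theta>))" for a c by (rule smooth_on_dd[OF \<Theta>1 x_axis_in_Basis])
  have commute: "dd u (dd v (dd (?y c) \<Theta>)) p = dd v (dd u (dd (?y c) \<Theta>)) p"
    if "u \<in> Basis" "v \<in> Basis" for u v c
    using dd_commute[OF U smooth_on_imp_smooth_upto[OF \<Theta>1] that p] .
  have T_sym: "T a b c = T a c b" for a b c
    unfolding T_def by (rule dd_commute_inner[OF U \<Theta> x_axis_in_Basis y_axis_in_Basis y_axis_in_Basis p])
  have S_sym: "S a b c = S b a c" for a b c
    unfolding S_def by (rule commute[OF x_axis_in_Basis x_axis_in_Basis])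
  have dd_omega: "dd v (omega \<Theta> i k) p
      = dd v (dd (?x i) (dd (?y k) \<Theta>)) p - dd v (dd (?x k) (dd (?y i) \<Theta>)) p"
    if "v \<in> Basis" for v i k
    unfolding omega_eq_dd using \<Theta>2 p that by (intro dd_diff smooth_on_imp_dd_differentiable)
  have D: "Dop lam j (omega \<Theta> i k) p = (T i j k - T k j i) - lam * (S j i k - S j k i)" for i j k
    unfolding Dop_eq_dd dd_omega[OF x_axis_in_Basis] dd_omega[OF y_axis_in_Basis] T_def S_def
      commute[OF y_axis_in_Basis x_axis_in_Basis] ..
  show ?thesis
    unfolding D T_sym[of i j k] T_sym[of k j i] T_sym[of j i k] S_sym[of j i k] S_sym[of j k i]
      S_sym[of i k j]
    by (simp add: algebra_simps)
qed

lemma Dop_TED: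
  assumes U: "open U" and \<Theta>: "smooth_on U \<Theta>" and TED: "\<forall>q\<in>U. TED \<Theta> q" and p: "p \<in> U"
  shows "Dop lam j (omega \<Theta> 1 2) p * omega \<Theta> 3 4 p + omega \<Theta> 1 2 p * Dop lam j (omega \<Theta> 3 4) p
    + Dop lam j (omega \<Theta> 2 3) p * omega \<Theta> 1 4 p + omega \<Theta> 2 3 p * Dop lam j (omega \<Theta> 1 4) p
    + Dop lam j (omega \<Theta> 3 1) p * omega \<Theta> 2 4 p + omega \<Theta> 3 1 p * Dop lam j (omega \<Theta> 2 4) p = 0"
proof -
  have \<omega>: "smooth_on U (omega \<Theta> i k)" for i k using U \<Theta> by (rule smooth_on_omega)
  have \<omega>\<omega>: "smooth_on U (\<lambda>q. omega \<Theta> i k q * omega \<Theta> i' k' q)" for i k i' k'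
    by (intro smooth_on_mult U \<omega>)
  have "0 = Dop lam j (\<lambda>q. omega \<Theta> 1 2 q * omega \<Theta> 3 4 q + omega \<Theta> 2 3 q * omega \<Theta> 1 4 q
      + omega \<Theta> 3 1 q * omega \<Theta> 2 4 q) p"
    using TED Dop_cong_open[OF U p, of _ "\<lambda>q. 0"] by (simp add: TED_def Dop_const)
  also have "\<dots> = Dop lam j (\<lambda>q. omega \<Theta> 1 2 q * omega \<Theta> 3 4 q) p
      + Dop lam j (\<lambda>q. omega \<Theta> 2 3 q * omega \<Theta> 1 4 q) p + Dop lam j (\<lambda>q. omega \<Theta> 3 1 q * omega \<Theta> 2 4 q) p"
    by (simp only: Dop_add[OF smooth_on_add[OF U \<omega>\<omega> \<omega>\<omega>] \<omega>\<omega> p] Dop_add[OF \<omega>\<omega> \<omega>\<omega> p])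
  finally show ?thesis by (simp add: Dop_mult[OF \<omega> \<omega> p] algebra_simps)
qed

section \<open>First-order operators \<open>\<Sum>\<^sub>j a\<^sub>j D\<^sub>j\<close>\<close>

definition vfield :: "real \<Rightarrow> (4 \<Rightarrow> pt \<Rightarrow> real) \<Rightarrow> (pt \<Rightarrow> real) \<Rightarrow> pt \<Rightarrow> real" where
  "vfield lam a \<psi> p = (\<Sum>j\<in>UNIV. a j p * Dop lam j \<psi> p)"

lemma smooth_on_vfield:
  "open U \<Longrightarrow> (\<And>j. smooth_on U (a j)) \<Longrightarrow> smooth_on U \<psi> \<Longrightarrow> smooth_on U (vfield lam a \<psi>)"
  unfolding vfield_def[abs_def] by (intro smooth_on_sum smooth_on_mult smooth_on_Dop)

lemma Dop_vfield:
  assumes "open U" "\<And>k. smooth_on U (a k)" "smooth_on U \<psi>" "p \<in> U"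
  shows "Dop lam j (vfield lam a \<psi>) p
    = (\<Sum>k\<in>UNIV. a k p * Dop lam j (Dop lam k \<psi>) p + Dop lam j (a k) p * Dop lam k \<psi> p)"
proof -
  have "Dop lam j (vfield lam a \<psi>) p = (\<Sum>k\<in>UNIV. Dop lam j (\<lambda>q. a k q * Dop lam k \<psi> q) p)"
    unfolding vfield_def[abs_def] using assms by (intro Dop_sum smooth_on_mult smooth_on_Dop)
  also have "\<dots> = (\<Sum>k\<in>UNIV. a k p * Dop lam j (Dop lam k \<psi>) p + Dop lam j (a k) p * Dop lam k \<psi> p)"
    by (simp add: Dop_mult[OF assms(2) smooth_on_Dop[OF assms(1,3)] assms(4)])
  finally show ?thesis .
qed

lemma vfield_vfield:
  assumes "open U" "\<And>k. smooth_on U (b k)" "smooth_on U \<psi>" "p \<in> U"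
  shows "vfield lam a (vfield lam b \<psi>) p
    = (\<Sum>j\<in>UNIV. \<Sum>k\<in>UNIV. a j p * b k p * Dop lam j (Dop lam k \<psi>) p)
      + (\<Sum>k\<in>UNIV. vfield lam a (b k) p * Dop lam k \<psi> p)"
proof -
  have "vfield lam a (vfield lam b \<psi>) p = (\<Sum>j\<in>UNIV. \<Sum>k\<in>UNIV.
      a j p * b k p * Dop lam j (Dop lam k \<psi>) p + a j p * Dop lam j (b k) p * Dop lam k \<psi> p)"
    unfolding vfield_def[of lam a] Dop_vfield[OF assms] by (simp add: sum_distrib_left algebra_simps)
  also have "\<dots> = (\<Sum>j\<in>UNIV. \<Sum>k\<in>UNIV. a j p * b k p * Dop lam j (Dop lam k \<psi>) p)
      + (\<Sum>k\<in>UNIV. \<Sum>j\<in>UNIV. a j p * Dop lam j (b k) p * Dop lam k \<psi> p)"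
    by (simp add: sum.distrib sum.swap[of "\<lambda>j k. a j p * Dop lam j (b k) p * Dop lam k \<psi> p"])
  also have "\<dots> = (\<Sum>j\<in>UNIV. \<Sum>k\<in>UNIV. a j p * b k p * Dop lam j (Dop lam k \<psi>) p)
      + (\<Sum>k\<in>UNIV. vfield lam a (b k) p * Dop lam k \<psi> p)"
    by (simp add: vfield_def sum_distrib_right)
  finally show ?thesis .
qed

lemma vfield_commutator:
  assumes U: "open U" and a: "\<And>k. smooth_on U (a k)" and b: "\<And>k. smooth_on U (b k)"
    and \<psi>: "smooth_on U \<psi>" and p: "p \<in> U"
  shows "vfield lam a (vfield lam b \<psi>) p - vfield lam b (vfield lam a \<psi>) p
    = vfield lam (\<lambda>k q. vfield lam a (b k) q - vfield lam b (a k) q) \<psi> p"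
proof -
  have "(\<Sum>j\<in>UNIV. \<Sum>k\<in>UNIV. a j p * b k p * Dop lam j (Dop lam k \<psi>) p)
      = (\<Sum>j\<in>UNIV. \<Sum>k\<in>UNIV. b j p * a k p * Dop lam j (Dop lam k \<psi>) p)"
    by (subst sum.swap) (simp add: Dop_commute[OF U \<psi> p] mult.commute)
  thus ?thesis
    unfolding vfield_vfield[OF U b \<psi> p] vfield_vfield[OF U a \<psi> p]
    by (simp add: vfield_def sum_subtractf left_diff_distrib)
qed

lemma vfield_lincomb:
  "(\<And>k. c k p = \<alpha> * a k p + \<beta> * b k p) \<Longrightarrow>
     vfield lam c \<psi> p = \<alpha> * vfield lam a \<psi> p + \<beta> * vfield lam b \<psi> p"
  by (simp add: vfield_def distrib_right sum.distrib sum_distrib_left mult.assoc)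

definition X3_coeff :: "(pt \<Rightarrow> real) \<Rightarrow> 4 \<Rightarrow> pt \<Rightarrow> real" where
  "X3_coeff \<Theta> j = (if j = 1 then omega \<Theta> 2 3 else if j = 2 then omega \<Theta> 3 1
     else if j = 3 then omega \<Theta> 1 2 else (\<lambda>_. 0))"

definition X4_coeff :: "(pt \<Rightarrow> real) \<Rightarrow> 4 \<Rightarrow> pt \<Rightarrow> real" where
  "X4_coeff \<Theta> j = (if j = 1 then omega \<Theta> 2 4 else if j = 2 then omega \<Theta> 4 1
     else if j = 4 then omega \<Theta> 1 2 else (\<lambda>_. 0))"

lemma X3_eq_vfield: "X3 \<Theta> lam = vfield lam (X3_coeff \<Theta>)"
  by (simp add: fun_eq_iff X3_def vfield_def X3_coeff_def sum_4)

lemma X4_eq_vfield: "X4 \<Theta> lam = vfield lam (X4_coeff \<Theta>)"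
  by (simp add: fun_eq_iff X4_def vfield_def X4_coeff_def sum_4)

lemma smooth_on_X3_coeff: "open U \<Longrightarrow> smooth_on U \<Theta> \<Longrightarrow> smooth_on U (X3_coeff \<Theta> j)"
  by (simp add: X3_coeff_def smooth_on_omega smooth_on_const)

lemma smooth_on_X4_coeff: "open U \<Longrightarrow> smooth_on U \<Theta> \<Longrightarrow> smooth_on U (X4_coeff \<Theta> j)"
  by (simp add: X4_coeff_def smooth_on_omega smooth_on_const)

section \<open>The commutator of \<open>X\<^sub>3\<close> and \<open>X\<^sub>4\<close>\<close>

text \<open>Read \<open>w\<close> as \<open>\<omega>\<close> and \<open>\<delta> j i k\<close> as \<open>D\<^sub>j \<omega>\<^sub>i\<^sub>k\<close>; then \<open>V\<close>, \<open>W\<close> are \<open>X\<^sub>3\<close>, \<open>X\<^sub>4\<close> applied to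
  functions given by their \<open>D\<close>-derivatives, and the two conclusions are the \<open>D\<^sub>a\<close>- and
  \<open>D\<^sub>b\<close>-components of \<open>\<omega>\<^sub>a\<^sub>b [X\<^sub>3,X\<^sub>4] = -(X\<^sub>4 \<omega>\<^sub>a\<^sub>b) X\<^sub>3 + (X\<^sub>3 \<omega>\<^sub>a\<^sub>b) X\<^sub>4\<close>.\<close>

lemma pfaffian_frame_identity:
  fixes w :: "'i \<Rightarrow> 'i \<Rightarrow> real" and \<delta> :: "'i \<Rightarrow> 'i \<Rightarrow> 'i \<Rightarrow> real"
  assumes w_antisym: "\<And>i k. w k i = - w i k"
    and \<delta>_antisym: "\<And>j i k. \<delta> j k i = - \<delta> j i k"
    and \<delta>_cyclic: "\<And>i j k. \<delta> j i k + \<delta> i k j + \<delta> k j i = 0"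
    and pf: "w a b * w c d + w b c * w a d + w c a * w b d = 0"
    and pf_deriv: "\<And>j. \<delta> j a b * w c d + w a b * \<delta> j c d + \<delta> j b c * w a d + w b c * \<delta> j a d
                       + \<delta> j c a * w b d + w c a * \<delta> j b d = 0"
  defines "V \<equiv> \<lambda>f. w b c * f a + w c a * f b + w a b * f c"
    and "W \<equiv> \<lambda>f. w b d * f a + w d a * f b + w a b * f d"
  shows "w a b * (V (\<lambda>j. \<delta> j b d) - W (\<lambda>j. \<delta> j b c)) = V (\<lambda>j. \<delta> j a b) * w b d - W (\<lambda>j. \<delta> j a b) * w b c"
    and "w a b * (V (\<lambda>j. \<delta> j d a) - W (\<lambda>j. \<delta> j c a)) = V (\<lambda>j. \<delta> j a b) * w d a - W (\<lambda>j. \<delta> j a b) * w c a"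
proof -
  let ?cyc = "\<lambda>i j k. \<delta> j i k + \<delta> i k j + \<delta> k j i"
  let ?pf = "w a b * w c d + w b c * w a d + w c a * w b d"
  let ?pf' = "\<lambda>j. \<delta> j a b * w c d + w a b * \<delta> j c d + \<delta> j b c * w a d + w b c * \<delta> j a d
                       + \<delta> j c a * w b d + w c a * \<delta> j b d"
  have w: "w d a = - w a d" "w c a = - w a c" by (rule w_antisym)+
  have \<delta>: "\<delta> j b a = - \<delta> j a b" "\<delta> j c b = - \<delta> j b c" "\<delta> j d a = - \<delta> j a d"
          "\<delta> j c a = - \<delta> j a c" "\<delta> j d b = - \<delta> j b d" "\<delta> j d c = - \<delta> j c d" for j
    by (rule \<delta>_antisym)+
  have "w a b * (V (\<lambda>j. \<delta> j b d) - W (\<lambda>j. \<delta> j b c)) - (V (\<lambda>j. \<delta> j a b) * w b d - W (\<lambda>j. \<delta> j a b) * w b c)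
      = w a b * w b d * ?cyc a b c - w a b * w b c * ?cyc a b d + (w a b)\<^sup>2 * ?cyc b c d
        + w a b * ?pf' b - \<delta> b a b * ?pf"
    unfolding V_def W_def w \<delta> by (simp add: algebra_simps power2_eq_square)
  then show "w a b * (V (\<lambda>j. \<delta> j b d) - W (\<lambda>j. \<delta> j b c)) = V (\<lambda>j. \<delta> j a b) * w b d - W (\<lambda>j. \<delta> j a b) * w b c"
    by (simp add: pf pf_deriv \<delta>_cyclic)
  have "w a b * (V (\<lambda>j. \<delta> j d a) - W (\<lambda>j. \<delta> j c a)) - (V (\<lambda>j. \<delta> j a b) * w d a - W (\<lambda>j. \<delta> j a b) * w c a)
      = w a b * w a c * ?cyc a b d - w a b * w a d * ?cyc a b c - (w a b)\<^sup>2 * ?cyc a c d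
        - w a b * ?pf' a + \<delta> a a b * ?pf"
    unfolding V_def W_def w \<delta> by (simp add: algebra_simps power2_eq_square)
  then show "w a b * (V (\<lambda>j. \<delta> j d a) - W (\<lambda>j. \<delta> j c a)) = V (\<lambda>j. \<delta> j a b) * w d a - W (\<lambda>j. \<delta> j a b) * w c a"
    by (simp add: pf pf_deriv \<delta>_cyclic)
qed

lemma X3_X4_commutator_coeff:
  assumes U: "open U" and \<Theta>: "smooth_on U \<Theta>" and TED: "\<forall>q\<in>U. TED \<Theta> q" and p: "p \<in> U"
    and nz: "omega \<Theta> 1 2 p \<noteq> 0"
  shows "X3 \<Theta> lam (X4_coeff \<Theta> k) p - X4 \<Theta> lam (X3_coeff \<Theta> k) p
    = - X4 \<Theta> lam (omega \<Theta> 1 2) p / omega \<Theta> 1 2 p * X3_coeff \<Theta> k p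
      + X3 \<Theta> lam (omega \<Theta> 1 2) p / omega \<Theta> 1 2 p * X4_coeff \<Theta> k p"
proof -
  note frame = pfaffian_frame_identity[where w = "\<lambda>i k. omega \<Theta> i k p"
      and \<delta> = "\<lambda>j i k. Dop lam j (omega \<Theta> i k) p" and a = 1 and b = 2 and c = 3 and d = 4,
      OF omega_antisym Dop_omega_antisym[OF U \<Theta> p] Dop_omega_cyclic[OF U \<Theta> p]
      TED[rule_format, OF p, unfolded TED_def] Dop_TED[OF U \<Theta> TED p]]
  have zero: "X3 \<Theta> lam (\<lambda>_. 0) p = 0" "X4 \<Theta> lam (\<lambda>_. 0) p = 0"
    by (simp_all add: X3_def X4_def Dop_const)
  consider "k = 1" | "k = 2" | "k = 3" | "k = 4" using exhaust_4 by blast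
  then show ?thesis
  proof cases
    case 1
    have "omega \<Theta> 1 2 p * (X3 \<Theta> lam (omega \<Theta> 2 4) p - X4 \<Theta> lam (omega \<Theta> 2 3) p)
        = X3 \<Theta> lam (omega \<Theta> 1 2) p * omega \<Theta> 2 4 p - X4 \<Theta> lam (omega \<Theta> 1 2) p * omega \<Theta> 2 3 p"
      using frame(1) by (simp add: X3_def X4_def)
    with 1 nz show ?thesis by (simp add: X3_coeff_def X4_coeff_def field_simps)
  next
    case 2
    have "omega \<Theta> 1 2 p * (X3 \<Theta> lam (omega \<Theta> 4 1) p - X4 \<Theta> lam (omega \<Theta> 3 1) p)
        = X3 \<Theta> lam (omega \<Theta> 1 2) p * omega \<Theta> 4 1 p - X4 \<Theta> lam (omega \<Theta> 1 2) p * omega \<Theta> 3 1 p"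
      using frame(2) by (simp add: X3_def X4_def)
    with 2 nz show ?thesis by (simp add: X3_coeff_def X4_coeff_def field_simps)
  qed (use nz zero in \<open>simp_all add: X3_coeff_def X4_coeff_def\<close>)
qed

theorem theorem1:
  fixes U :: "pt set" and \<Theta> :: "pt \<Rightarrow> real" and lam :: real
  assumes "open U"
    and "smooth_on U \<Theta>"
    and "\<forall>p\<in>U. TED \<Theta> p"
    and "\<forall>p\<in>U. omega \<Theta> 1 2 p \<noteq> 0"
  shows "\<exists>\<alpha> \<beta>. smooth_on U \<alpha> \<and> smooth_on U \<beta> \<and>
           (\<forall>\<psi>. smooth_on U \<psi> \<longrightarrow>
              (\<forall>p\<in>U. X3 \<Theta> lam (X4 \<Theta> lam \<psi>) p - X4 \<Theta> lam (X3 \<Theta> lam \<psi>) p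
                      = \<alpha> p * X3 \<Theta> lam \<psi> p + \<beta> p * X4 \<Theta> lam \<psi> p))"
proof -
  note U = assms(1) and \<Theta> = assms(2) and TED = assms(3) and nz = assms(4)
  define \<alpha> where "\<alpha> q = - X4 \<Theta> lam (omega \<Theta> 1 2) q / omega \<Theta> 1 2 q" for q
  define \<beta> where "\<beta> q = X3 \<Theta> lam (omega \<Theta> 1 2) q / omega \<Theta> 1 2 q" for q
  have coeffs: "\<And>k. smooth_on U (X3_coeff \<Theta> k)" "\<And>k. smooth_on U (X4_coeff \<Theta> k)"
    and \<omega>: "smooth_on U (omega \<Theta> 1 2)"
    using U \<Theta> by (auto intro: smooth_on_X3_coeff smooth_on_X4_coeff smooth_on_omega)
  have "smooth_on U (X3 \<Theta> lam (omega \<Theta> 1 2))" "smooth_on U (X4 \<Theta> lam (omega \<Theta> 1 2))"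
    unfolding X3_eq_vfield X4_eq_vfield by (intro smooth_on_vfield U coeffs \<omega>)+
  then have "smooth_on U \<alpha>" "smooth_on U \<beta>"
    unfolding \<alpha>_def[abs_def] \<beta>_def[abs_def] using U \<omega> nz
    by (auto intro!: smooth_on_divide smooth_on_minus)
  moreover have "X3 \<Theta> lam (X4 \<Theta> lam \<psi>) p - X4 \<Theta> lam (X3 \<Theta> lam \<psi>) p
      = \<alpha> p * X3 \<Theta> lam \<psi> p + \<beta> p * X4 \<Theta> lam \<psi> p" if \<psi>: "smooth_on U \<psi>" and p: "p \<in> U" for \<psi> p
  proof -
    have "X3 \<Theta> lam (X4 \<Theta> lam \<psi>) p - X4 \<Theta> lam (X3 \<Theta> lam \<psi>) p
        = vfield lam (\<lambda>k q. X3 \<Theta> lam (X4_coeff \<Theta> k) q - X4 \<Theta> lam (X3_coeff \<Theta> k) q) \<psi> p"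
      unfolding X3_eq_vfield X4_eq_vfield by (rule vfield_commutator[OF U coeffs \<psi> p])
    also have "\<dots> = \<alpha> p * vfield lam (X3_coeff \<Theta>) \<psi> p + \<beta> p * vfield lam (X4_coeff \<Theta>) \<psi> p"
      using X3_X4_commutator_coeff[OF U \<Theta> TED p] nz p unfolding \<alpha>_def \<beta>_def
      by (intro vfield_lincomb) blast
    finally show ?thesis by (simp only: X3_eq_vfield X4_eq_vfield)
  qed
  ultimately show ?thesis by blast
qed

end
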